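(* Fix $y\in\mathbb{R}$, a bandwidth $h>0$, a kernel $K$, integers $m,n\ge1$, and real observations $Y_1,\dots,Y_{n+1}$ (held fixed). Let $\Theta\subset\mathbb{R}^m$ be a convex open set. For a configuration $x=(x_1,\dots,x_{n+1})\in\{1,\dots,m\}^{n+1}$ and $\theta=(\theta_1,\dots,\theta_m)\in\Theta$ let $$U(\theta;x)=\frac{1}{nh}\sum_{k=1}^n\sum_{i=1}^mK_h(y-Y_k)\mathbf{1}_i(x_{k+1})(Y_{k+1}-\theta_i)^2.$$ Let $\pi$ be a fixed probability distribution on $\{1,\dots,m\}^{n+1}$ (the conditional law of the hidden states given the observations under a fixed parameter), and set $$u(\theta)=\frac{1}{nh}\sum_{k=1}^n\sum_{i=1}^mK_h(y-Y_k)\,\pi(x_{k+1}=i)\,(Y_{k+1}-\theta_i)^2 .$$ Let $X^1,X^2,\dots$ be random configurations such that, for each $t\ge1$, conditionally on $\mathcal{F}_{t-1}=\sigma(X^1,\dots,X^{t-1})$, $X^t$ has law $\pi$. Given $\theta^0\in\Theta$, define recursively $\theta^t=\theta^{t-1}-\gamma_t\nabla_\theta U(\theta^{t-1};X^t)$ and $\bar\theta^t=\frac1t\sum_{k=1}^t\theta^k$ (with $\bar\theta^0=\theta^0$). Assume $\{\gamma_t\}$ is a positive sequence with $\sum_t\gamma_t=\infty$ and $\sum_t\gamma_t^2<\infty$, and that the closure of $\{\bar\theta^t\}$ is a compact subset of $\Theta$. Then, almost surely, $\lim_{t\to\infty}\nabla_\theta u(\bar\theta^t)=0$; furthermore $\lim_{t\to\infty}\bar\theta^t=\theta^*$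 with $\nabla_\theta u(\theta^* )=0$, almost surely.
   Context: $K_h(v)=K(v/h)$ and $\mathbf{1}_i(x)$ is the indicator of $x=i$; $\pi(x_{k+1}=i)$ is the $\pi$-probability that the $(k+1)$-th coordinate equals $i$. In the paper's algorithm $\pi$ is the conditional distribution $p(X_{1:n}\mid Y_{0:n},\theta')$ of the hidden Markov regime of an MS-NAR model given the observations, sampled by a Carter–Kohn forward-filtering backward-sampling step, and $u$ is the conditional expectation of $U$ given $\mathcal{F}_{t-1}$. *)

theory Defs
  imports "HOL-Probability.Probability"
begin

definition is_kernel :: "(real \<Rightarrow> real) \<Rightarrow> bool" where
  "is_kernel K \<longleftrightarrow> (\<forall>v. K v \<ge> 0) \<and> integrable lborel K \<and> (\<integral>v. K v \<partial>lborel) = 1"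

definition Kh :: "(real \<Rightarrow> real) \<Rightarrow> real \<Rightarrow> real \<Rightarrow> real" where
  "Kh K h v = K (v / h)"

definition grad :: "(real ^ 'm \<Rightarrow> real) \<Rightarrow> real ^ 'm \<Rightarrow> real ^ 'm" where
  "grad f \<theta> = (THE g. (f has_derivative (\<lambda>v. g \<bullet> v)) (at \<theta>))"

text \<open>Configurations x = (x_1,...,x_{n+1}) with values in the regime set 'm
  (which plays the role of {1..m}, m = CARD('m)); extensional outside {1..n+1}.\<close>
definition Cfg :: "nat \<Rightarrow> (nat \<Rightarrow> 'm) set" where
  "Cfg n = PiE {1..n+1} (\<lambda>_. UNIV)"

definition U :: "real \<Rightarrow> real \<Rightarrow> (real \<Rightarrow> real) \<Rightarrow> (nat \<Rightarrow> real) \<Rightarrow> nat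
    \<Rightarrow> (nat \<Rightarrow> 'm::finite) \<Rightarrow> real ^ 'm \<Rightarrow> real" where
  "U y h K Y n x \<theta> = (1 / (real n * h)) *
     (\<Sum>k=1..n. \<Sum>i\<in>UNIV. Kh K h (y - Y k) * (if x (k+1) = i then 1 else 0) * (Y (k+1) - \<theta> $ i)\<^sup>2)"

definition u :: "real \<Rightarrow> real \<Rightarrow> (real \<Rightarrow> real) \<Rightarrow> (nat \<Rightarrow> real) \<Rightarrow> nat
    \<Rightarrow> (nat \<Rightarrow> 'm::finite) pmf \<Rightarrow> real ^ 'm \<Rightarrow> real" where
  "u y h K Y n \<pi> \<theta> = (1 / (real n * h)) *
     (\<Sum>k=1..n. \<Sum>i\<in>UNIV. Kh K h (y - Y k) * measure_pmf.prob \<pi> {x. x (k+1) = i} * (Y (k+1) - \<theta> $ i)\<^sup>2)"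

fun sgd :: "real \<Rightarrow> real \<Rightarrow> (real \<Rightarrow> real) \<Rightarrow> (nat \<Rightarrow> real) \<Rightarrow> nat
    \<Rightarrow> real ^ 'm::finite \<Rightarrow> (nat \<Rightarrow> real) \<Rightarrow> (nat \<Rightarrow> nat \<Rightarrow> 'm) \<Rightarrow> nat \<Rightarrow> real ^ 'm" where
  "sgd y h K Y n \<theta>0 \<gamma> X 0 = \<theta>0"
| "sgd y h K Y n \<theta>0 \<gamma> X (Suc t) =
     sgd y h K Y n \<theta>0 \<gamma> X t - \<gamma> (Suc t) *\<^sub>R grad (U y h K Y n (X (Suc t))) (sgd y h K Y n \<theta>0 \<gamma> X t)"

definition sgd_avg :: "real \<Rightarrow> real \<Rightarrow> (real \<Rightarrow> real) \<Rightarrow> (nat \<Rightarrow> real) \<Rightarrow> nat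
    \<Rightarrow> real ^ 'm::finite \<Rightarrow> (nat \<Rightarrow> real) \<Rightarrow> (nat \<Rightarrow> nat \<Rightarrow> 'm) \<Rightarrow> nat \<Rightarrow> real ^ 'm" where
  "sgd_avg y h K Y n \<theta>0 \<gamma> X t =
     (if t = 0 then \<theta>0 else (1 / real t) *\<^sub>R (\<Sum>k=1..t. sgd y h K Y n \<theta>0 \<gamma> X k))"

end

theory Submission
  imports Defs
begin

text \<open>
  The contrast \<open>U(\<theta>; x)\<close> is a separable quadratic in \<open>\<theta>\<close>, so coordinate \<open>i\<close> of the stochastic
  gradient iteration is the linear Robbins--Monro recursion
  \<open>\<theta>\<^sub>i \<leftarrow> \<theta>\<^sub>i - a\<^sub>t (s\<^sub>i(X\<^sup>t) \<theta>\<^sub>i - r\<^sub>i(X\<^sup>t))\<close> with \<open>a\<^sub>t = 2\<gamma>\<^sub>t/(nh)\<close>, where \<open>s\<^sub>i(x)\<close> is the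
  kernel-weighted number of visits of \<open>x\<close> to regime \<open>i\<close> and \<open>r\<^sub>i(x)\<close> the corresponding weighted
  sum of responses; the \<open>\<pi>\<close>-means \<open>E s\<^sub>i\<close>, \<open>E r\<^sub>i\<close> are exactly the coefficients of \<open>\<nabla>u\<close>.
  If \<open>E s\<^sub>i > 0\<close>, the error \<open>\<theta>\<^sub>i - E r\<^sub>i / E s\<^sub>i\<close> obeys a contraction with factors \<open>a\<^sub>t s\<^sub>i(X\<^sup>t)\<close>, whose sum
  diverges, perturbed by the martingale increments \<open>a\<^sub>t (r\<^sub>i - (E r\<^sub>i / E s\<^sub>i) s\<^sub>i)(X\<^sup>t)\<close>; by
  Kolmogorov's maximal inequality and \<open>\<Sum> a\<^sub>t\<^sup>2 < \<infinity>\<close> these are almost surely summable, which forces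
  the error to zero. If \<open>E s\<^sub>i = 0\<close>, then \<open>s\<^sub>i\<close> and \<open>r\<^sub>i\<close> vanish on the support of \<open>\<pi>\<close> and the
  coordinate never moves. Hence the iterates converge almost surely to a zero of \<open>\<nabla>u\<close>, and so do
  their Cesaro averages.
\<close>

section \<open>Contractive recursions and Cesaro means\<close>

lemma nonneg_contraction_tendsto_zero:
  fixes \<phi> q :: "nat \<Rightarrow> real"
  assumes nonneg: "\<And>t. \<phi> t \<ge> 0"
    and q: "\<And>t. t \<ge> T \<Longrightarrow> 0 \<le> q (Suc t) \<and> q (Suc t) \<le> 1"
    and contraction: "\<And>t. t \<ge> T \<Longrightarrow> \<phi> (Suc t) \<le> (1 - q (Suc t)) * \<phi> t"
    and not_summable: "\<not> summable q"
  shows "\<phi> \<longlonglongrightarrow> 0"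
proof (rule LIMSEQ_I)
  fix \<epsilon> :: real assume "\<epsilon> > 0"
  have decreasing: "\<phi> (t + k) \<le> \<phi> t" if "t \<ge> T" for t k
  proof (induction k)
    case (Suc k)
    have "\<phi> (Suc (t + k)) \<le> (1 - q (Suc (t + k))) * \<phi> (t + k)"
      using contraction that by simp
    also have "\<dots> \<le> \<phi> (t + k)"
      using q[of "t + k"] nonneg[of "t + k"] that by (simp add: left_diff_distrib)
    finally show ?case using Suc by simp
  qed simp
  have "\<exists>t\<ge>T. \<phi> t < \<epsilon>"
  proof (rule ccontr)
    assume "\<not> ?thesis"
    then have large: "\<And>t. t \<ge> T \<Longrightarrow> \<epsilon> \<le> \<phi> t" by (meson not_le)
    \<comment> \<open>each step then lowers \<open>\<phi>\<close> by at least \<open>\<epsilon> q\<close>, so the partial sums of \<open>q\<close> are bounded\<close>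
    have telescope: "\<epsilon> * (\<Sum>j<k. q (Suc (T + j))) \<le> \<phi> T - \<phi> (T + k)" for k
    proof (induction k)
      case (Suc k)
      have "q (Suc (T + k)) * \<epsilon> \<le> q (Suc (T + k)) * \<phi> (T + k)"
        using large[of "T + k"] q[of "T + k"] by (intro mult_left_mono) auto
      then show ?case
        using Suc contraction[of "T + k"] by (simp add: algebra_simps)
    qed simp
    have "summable (\<lambda>j. q (Suc (T + j)))"
    proof (rule summableI_nonneg_bounded)
      show "0 \<le> q (Suc (T + j))" for j using q[of "T + j"] by simp
      show "(\<Sum>j<k. q (Suc (T + j))) \<le> \<phi> T / \<epsilon>" for k
        using telescope[of k] nonneg[of "T + k"] \<open>\<epsilon> > 0\<close> by (simp add: field_simps)
    qed
    then have "summable (\<lambda>j. q (j + Suc T))" by (simp add: add.commute)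
    then show False using not_summable summable_iff_shift by blast
  qed
  then obtain t0 where "t0 \<ge> T" "\<phi> t0 < \<epsilon>" by blast
  show "\<exists>N. \<forall>t\<ge>N. norm (\<phi> t - 0) < \<epsilon>"
  proof (intro exI allI impI)
    fix t assume "t \<ge> t0"
    then have "\<phi> t \<le> \<phi> t0" using decreasing[of t0 "t - t0"] \<open>t0 \<ge> T\<close> by simp
    then show "norm (\<phi> t - 0) < \<epsilon>" using \<open>\<phi> t0 < \<epsilon>\<close> nonneg[of t] by simp
  qed
qed

lemma convex_recursion_eventually_small:
  fixes d q r :: "nat \<Rightarrow> real"
  assumes bounds: "\<And>t. t \<ge> T \<Longrightarrow> 0 \<le> q (Suc t) \<and> q (Suc t) \<le> 1 \<and> \<bar>r t\<bar> \<le> c"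
    and recursion: "\<And>t. d (Suc t) = (1 - q (Suc t)) * d t + q (Suc t) * r t"
    and not_summable: "\<not> summable q" and "\<delta> > 0"
  shows "eventually (\<lambda>t. \<bar>d t\<bar> < c + \<delta>) sequentially"
proof -
  \<comment> \<open>the excess of \<open>\<bar>d\<bar>\<close> over the bound \<open>c\<close> on the inputs contracts\<close>
  define \<phi> where "\<phi> t = max (\<bar>d t\<bar> - c) 0" for t
  have "\<phi> (Suc t) \<le> (1 - q (Suc t)) * \<phi> t" if "t \<ge> T" for t
  proof -
    have q: "0 \<le> q (Suc t)" "q (Suc t) \<le> 1" and r: "\<bar>r t\<bar> \<le> c" using bounds[OF that] by auto
    have "\<bar>d (Suc t)\<bar> \<le> (1 - q (Suc t)) * \<bar>d t\<bar> + q (Suc t) * \<bar>r t\<bar>"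
      unfolding recursion using q abs_triangle_ineq[of "(1 - q (Suc t)) * d t" "q (Suc t) * r t"]
      by (simp add: abs_mult)
    also have "\<dots> \<le> (1 - q (Suc t)) * \<bar>d t\<bar> + q (Suc t) * c"
      using q r by (intro add_left_mono mult_left_mono) auto
    finally have "\<bar>d (Suc t)\<bar> - c \<le> (1 - q (Suc t)) * (\<bar>d t\<bar> - c)"
      by (simp add: algebra_simps)
    moreover have "(1 - q (Suc t)) * (\<bar>d t\<bar> - c) \<le> (1 - q (Suc t)) * \<phi> t"
      using q by (intro mult_left_mono) (auto simp: \<phi>_def)
    ultimately show ?thesis using q by (simp add: \<phi>_def)
  qed
  then have "\<phi> \<longlonglongrightarrow> 0"
    using bounds not_summable
    by (intro nonneg_contraction_tendsto_zero[where T = T]) (auto simp: \<phi>_def)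
  from order_tendstoD(2)[OF this \<open>\<delta> > 0\<close>] show ?thesis
    by (rule eventually_mono) (auto simp: \<phi>_def)
qed

lemma perturbed_contraction_tendsto_zero:
  fixes e q g :: "nat \<Rightarrow> real"
  assumes q: "eventually (\<lambda>t. 0 \<le> q t \<and> q t \<le> 1) sequentially"
    and not_summable: "\<not> summable q" and summable: "summable g"
    and recursion: "\<And>t. e (Suc t) = (1 - q (Suc t)) * e t + g (Suc t)"
  shows "e \<longlonglongrightarrow> 0"
proof (rule LIMSEQ_I)
  fix \<epsilon> :: real assume "\<epsilon> > 0"
  \<comment> \<open>adding the tail \<open>r\<close> of \<open>\<Sum> g\<close> turns the recursion into a convex combination of \<open>d\<close> and \<open>r\<close>\<close>
  define r where "r t = suminf g - (\<Sum>i<Suc t. g i)" for t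
  define d where "d t = e t + r t" for t
  have d_Suc: "d (Suc t) = (1 - q (Suc t)) * d t + q (Suc t) * r t" for t
    by (simp add: d_def r_def recursion algebra_simps)
  have "(\<lambda>t. \<Sum>i<Suc t. g i) \<longlonglongrightarrow> suminf g"
    using summable_LIMSEQ[OF summable] by (rule LIMSEQ_Suc)
  from tendsto_minus[OF LIM_zero[OF this]] have "r \<longlonglongrightarrow> 0"
    by (simp add: r_def[abs_def] del: sum.lessThan_Suc)
  then have "eventually (\<lambda>t. \<bar>r t\<bar> < \<epsilon> / 3) sequentially"
    using order_tendstoD(2)[OF tendsto_rabs_zero[OF \<open>r \<longlonglongrightarrow> 0\<close>], of "\<epsilon> / 3"] \<open>\<epsilon> > 0\<close> by simp
  with q have "eventually (\<lambda>t. (0 \<le> q t \<and> q t \<le> 1) \<and> \<bar>r t\<bar> < \<epsilon> / 3) sequentially"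
    by (rule eventually_conj)
  then obtain T where T: "\<And>t. t \<ge> T \<Longrightarrow> 0 \<le> q t \<and> q t \<le> 1 \<and> \<bar>r t\<bar> < \<epsilon> / 3"
    unfolding eventually_sequentially by blast
  have "eventually (\<lambda>t. \<bar>d t\<bar> < \<epsilon> / 3 + \<epsilon> / 3) sequentially"
    using T d_Suc not_summable \<open>\<epsilon> > 0\<close>
    by (intro convex_recursion_eventually_small[where T = T]) (auto simp: less_imp_le)
  then obtain N where N: "\<And>t. t \<ge> N \<Longrightarrow> \<bar>d t\<bar> < \<epsilon> / 3 + \<epsilon> / 3"
    unfolding eventually_sequentially by blast
  show "\<exists>N. \<forall>t\<ge>N. norm (e t - 0) < \<epsilon>"
  proof (intro exI allI impI)
    fix t assume "t \<ge> max N T"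
    then have "\<bar>e t + r t\<bar> < \<epsilon> / 3 + \<epsilon> / 3" "\<bar>r t\<bar> < \<epsilon> / 3"
      using N[of t] T[of t] by (auto simp: d_def)
    then show "norm (e t - 0) < \<epsilon>" by (simp add: abs_if split: if_splits)
  qed
qed

lemma Cesaro_mean_tendsto_zero:
  fixes z :: "nat \<Rightarrow> 'a::real_normed_vector"
  assumes "z \<longlonglongrightarrow> 0"
  shows "(\<lambda>t. (1 / real t) *\<^sub>R (\<Sum>k=1..t. z k)) \<longlonglongrightarrow> 0"
proof (rule LIMSEQ_I)
  fix \<epsilon> :: real assume "\<epsilon> > 0"
  obtain N where N: "\<And>k. k \<ge> N \<Longrightarrow> norm (z k) < \<epsilon> / 2"
    using LIMSEQ_D[OF assms, of "\<epsilon> / 2"] \<open>\<epsilon> > 0\<close> by auto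
  define C where "C = (\<Sum>k=1..N. norm (z k))"
  obtain N' :: nat where N': "N' > 2 * C / \<epsilon>" using reals_Archimedean2 by blast
  show "\<exists>N. \<forall>t\<ge>N. norm ((1 / real t) *\<^sub>R (\<Sum>k=1..t. z k) - 0) < \<epsilon>"
  proof (intro exI allI impI)
    fix t assume t: "t \<ge> max (Suc N) N'"
    have "norm (\<Sum>k=1..t. z k) \<le> (\<Sum>k=1..t. norm (z k))" by (rule norm_sum)
    also have "\<dots> \<le> (\<Sum>k=1..t. (if k \<le> N then norm (z k) else 0) + \<epsilon> / 2)"
      using N \<open>\<epsilon> > 0\<close> by (intro sum_mono) (auto simp: less_imp_le)
    also have "\<dots> = (\<Sum>k\<in>{1..t} \<inter> {k. k \<le> N}. norm (z k)) + real t * (\<epsilon> / 2)"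
      by (simp add: sum.distrib sum.inter_restrict)
    also have "{1..t} \<inter> {k. k \<le> N} = {1..N}" using t by auto
    finally have "norm (\<Sum>k=1..t. z k) \<le> C + real t * (\<epsilon> / 2)" by (simp add: C_def)
    moreover have "2 * C / \<epsilon> < real t" using N' t by (smt (verit) max.bounded_iff of_nat_mono)
    then have "C < real t * (\<epsilon> / 2)" using \<open>\<epsilon> > 0\<close> by (simp add: field_simps)
    ultimately have "norm (\<Sum>k=1..t. z k) < real t * \<epsilon>" by simp
    then show "norm ((1 / real t) *\<^sub>R (\<Sum>k=1..t. z k) - 0) < \<epsilon>"
      using t by (simp add: field_simps)
  qed
qed

lemma Cesaro_mean_tendsto:
  fixes x :: "nat \<Rightarrow> 'a::real_normed_vector"
  assumes "x \<longlonglongrightarrow> L"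
  shows "(\<lambda>t. (1 / real t) *\<^sub>R (\<Sum>k=1..t. x k)) \<longlonglongrightarrow> L"
proof -
  have "(\<lambda>t. L + (1 / real t) *\<^sub>R (\<Sum>k=1..t. x k - L)) \<longlonglongrightarrow> L + 0"
    using LIM_zero[OF assms] by (intro tendsto_add tendsto_const Cesaro_mean_tendsto_zero)
  moreover have "eventually (\<lambda>t. L + (1 / real t) *\<^sub>R (\<Sum>k=1..t. x k - L)
      = (1 / real t) *\<^sub>R (\<Sum>k=1..t. x k)) sequentially"
    by (intro eventually_sequentiallyI[of 1])
      (simp add: sum_subtractf scaleR_diff_right scaleR_sum_right[symmetric] sum_constant_scaleR)
  ultimately show ?thesis by (simp add: Lim_transform_eventually)
qed

lemma sum_atMost_split:
  fixes g :: "nat \<Rightarrow> 'a::comm_monoid_add"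
  assumes "N \<le> k"
  shows "sum g {..k} = sum g {..N} + sum g {N<..k}"
  by (subst ivl_disj_un_one(3)[OF assms, symmetric]) (rule sum.union_disjoint; auto)

lemma summable_if_tail_sums_vanish:
  fixes g :: "nat \<Rightarrow> real"
  assumes small: "\<And>\<epsilon>. \<epsilon> > 0 \<Longrightarrow> \<exists>N. \<forall>m\<ge>N. \<bar>\<Sum>t\<in>{N<..m}. g t\<bar> < \<epsilon>"
  shows "summable g"
  unfolding summable_iff_convergent' Cauchy_convergent_iff[symmetric]
proof (rule CauchyI)
  fix \<epsilon> :: real assume "\<epsilon> > 0"
  then obtain N where N: "\<And>m. m \<ge> N \<Longrightarrow> \<bar>\<Sum>t\<in>{N<..m}. g t\<bar> < \<epsilon> / 2"
    using small[of "\<epsilon> / 2"] by auto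
  show "\<exists>M. \<forall>m\<ge>M. \<forall>k\<ge>M. norm (sum g {..m} - sum g {..k}) < \<epsilon>"
  proof (intro exI allI impI)
    fix m k assume "m \<ge> N" "k \<ge> N"
    then show "norm (sum g {..m} - sum g {..k}) < \<epsilon>"
      using N[of m] N[of k] sum_atMost_split[of N m g] sum_atMost_split[of N k g] by simp
  qed
qed

lemma sum_first_exceedance:
  fixes N L :: nat
  shows "(\<Sum>k\<in>{N<..L}. of_bool (P k \<and> (\<forall>j\<in>{N<..<k}. \<not> P j)) :: real)
     = of_bool (\<exists>m\<in>{N<..L}. P m)"
proof (induction L)
  case (Suc L)
  show ?case
  proof (cases "N \<le> L")
    case True
    then have "{N<..Suc L} = insert (Suc L) {N<..L}" "{N<..<Suc L} = {N<..L}" by auto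
    then show ?thesis using Suc by auto
  next
    case False
    then have "{N<..Suc L} = {}" by auto
    then show ?thesis by simp
  qed
qed simp

lemma tail_suminf_tendsto_zero:
  fixes g :: "nat \<Rightarrow> real"
  assumes "summable g"
  shows "(\<lambda>N. suminf g - sum g {..N}) \<longlonglongrightarrow> 0"
proof -
  have "(\<lambda>N. sum g {..N}) \<longlonglongrightarrow> suminf g"
    using summable_LIMSEQ'[OF assms] .
  from tendsto_minus[OF LIM_zero[OF this]] show ?thesis by simp
qed

lemma sum_greaterThanAtMost_le_tail_suminf:
  fixes g :: "nat \<Rightarrow> real"
  assumes "summable g" "\<And>t. g t \<ge> 0" "N \<le> L"
  shows "sum g {N<..L} \<le> suminf g - sum g {..N}"
  using sum_atMost_split[OF assms(3), of g] sum_le_suminf[OF assms(1), of "{..L}"] assms(2) by simp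

lemma tendsto_zero_if_square_summable:
  fixes a :: "nat \<Rightarrow> real"
  assumes "summable (\<lambda>t. (a t)\<^sup>2)"
  shows "a \<longlonglongrightarrow> 0"
proof -
  have "(\<lambda>t. sqrt ((a t)\<^sup>2)) \<longlonglongrightarrow> sqrt 0"
    using summable_LIMSEQ_zero[OF assms] by (rule tendsto_real_sqrt)
  then show ?thesis by (simp add: tendsto_rabs_zero_iff)
qed

section \<open>Gradients of the contrasts\<close>

lemma grad_eqI:
  fixes f :: "real ^ 'm \<Rightarrow> real"
  assumes "(f has_derivative (\<lambda>v. g \<bullet> v)) (at \<theta>)"
  shows "grad f \<theta> = g"
  unfolding grad_def
proof (rule the_equality)
  fix g' assume "(f has_derivative (\<lambda>v. g' \<bullet> v)) (at \<theta>)"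
  from has_derivative_unique[OF assms this] have "(g - g') \<bullet> (g - g') = 0"
    by (metis inner_diff_left inner_diff_right diff_self)
  then show "g' = g" by simp
qed fact

lemma grad_weighted_squares:
  fixes W :: "'k \<Rightarrow> 'm::finite \<Rightarrow> real" and Z :: "'k \<Rightarrow> real"
  shows "grad (\<lambda>\<theta>::real^'m. C * (\<Sum>k\<in>I. \<Sum>i\<in>UNIV. W k i * (Z k - \<theta> $ i)\<^sup>2)) \<theta>
     = (\<chi> i. 2 * C * ((\<Sum>k\<in>I. W k i) * \<theta> $ i - (\<Sum>k\<in>I. W k i * Z k)))"
proof (rule grad_eqI)
  have "(\<lambda>v. C * (\<Sum>k\<in>I. \<Sum>i\<in>UNIV. - (W k i * (2 * v $ i * (Z k - \<theta> $ i)))))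
      = (\<lambda>v. (\<chi> i. 2 * C * ((\<Sum>k\<in>I. W k i) * \<theta> $ i - (\<Sum>k\<in>I. W k i * Z k))) \<bullet> v)"
    by (auto simp: inner_vec_def sum_distrib_left sum_distrib_right sum_subtractf
        algebra_simps intro!: ext sum.cong | subst sum.swap)+
  then show "((\<lambda>\<theta>::real^'m. C * (\<Sum>k\<in>I. \<Sum>i\<in>UNIV. W k i * (Z k - \<theta> $ i)\<^sup>2)) has_derivative
      (\<lambda>v. (\<chi> i. 2 * C * ((\<Sum>k\<in>I. W k i) * \<theta> $ i - (\<Sum>k\<in>I. W k i * Z k))) \<bullet> v)) (at \<theta>)"
    by (auto intro!: derivative_eq_intros bounded_linear_imp_has_derivative bounded_linear_vec_nth)
qed

text \<open>These are the functions \<open>s\<^sub>i\<close> and \<open>r\<^sub>i\<close> of the proof idea above.\<close>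

definition regime_weight ::
    "real \<Rightarrow> real \<Rightarrow> (real \<Rightarrow> real) \<Rightarrow> (nat \<Rightarrow> real) \<Rightarrow> nat \<Rightarrow> 'm \<Rightarrow> (nat \<Rightarrow> 'm) \<Rightarrow> real" where
  "regime_weight y h K Y n i x = (\<Sum>k=1..n. Kh K h (y - Y k) * (if x (k+1) = i then 1 else 0))"

definition regime_moment ::
    "real \<Rightarrow> real \<Rightarrow> (real \<Rightarrow> real) \<Rightarrow> (nat \<Rightarrow> real) \<Rightarrow> nat \<Rightarrow> 'm \<Rightarrow> (nat \<Rightarrow> 'm) \<Rightarrow> real" where
  "regime_moment y h K Y n i x =
     (\<Sum>k=1..n. Kh K h (y - Y k) * (if x (k+1) = i then 1 else 0) * Y (k+1))"

lemma grad_U: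
  "grad (U y h K Y n x) \<theta> = (\<chi> i. 2 / (real n * h) *
     (regime_weight y h K Y n i x * \<theta> $ i - regime_moment y h K Y n i x))"
proof -
  have U_eq: "U y h K Y n x = (\<lambda>\<theta>. 1 / (real n * h) * (\<Sum>k\<in>{1..n}. \<Sum>i\<in>UNIV.
      (Kh K h (y - Y k) * (if x (k+1) = i then 1 else 0)) * (Y (k+1) - \<theta> $ i)\<^sup>2))"
    by (simp add: fun_eq_iff U_def)
  show ?thesis
    unfolding U_eq grad_weighted_squares by (simp add: regime_weight_def regime_moment_def)
qed

lemma if_regime_eq_indicator: "(if x (k+1) = i then 1 else 0 :: real) = indicator {x. x (k+1) = i} x"
  by (simp add: indicator_def)

lemma expectation_regime_weight:
  "measure_pmf.expectation \<pi> (regime_weight y h K Y n i)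
     = (\<Sum>k=1..n. Kh K h (y - Y k) * measure_pmf.prob \<pi> {x. x (k+1) = i})"
  unfolding regime_weight_def if_regime_eq_indicator
  by (subst Bochner_Integration.integral_sum) (auto simp: less_top[symmetric])

lemma expectation_regime_moment:
  "measure_pmf.expectation \<pi> (regime_moment y h K Y n i)
     = (\<Sum>k=1..n. Kh K h (y - Y k) * measure_pmf.prob \<pi> {x. x (k+1) = i} * Y (k+1))"
  unfolding regime_moment_def if_regime_eq_indicator
  by (subst Bochner_Integration.integral_sum) (auto simp: less_top[symmetric] mult_ac)

lemma grad_u:
  "grad (u y h K Y n \<pi>) \<theta> = (\<chi> i. 2 / (real n * h) *
     (measure_pmf.expectation \<pi> (regime_weight y h K Y n i) * \<theta> $ i
      - measure_pmf.expectation \<pi> (regime_moment y h K Y n i)))"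
proof -
  have u_eq: "u y h K Y n \<pi> = (\<lambda>\<theta>. 1 / (real n * h) * (\<Sum>k\<in>{1..n}. \<Sum>i\<in>UNIV.
      (Kh K h (y - Y k) * measure_pmf.prob \<pi> {x. x (k+1) = i}) * (Y (k+1) - \<theta> $ i)\<^sup>2))"
    by (simp add: fun_eq_iff u_def)
  show ?thesis
    unfolding u_eq grad_weighted_squares by (simp add: expectation_regime_weight expectation_regime_moment)
qed

lemma finite_Cfg: "finite (Cfg n :: (nat \<Rightarrow> 'm::finite) set)"
  unfolding Cfg_def by (intro finite_PiE) auto

lemma regime_weight_nonneg: "(\<And>v. K v \<ge> 0) \<Longrightarrow> regime_weight y h K Y n i x \<ge> 0"
  unfolding regime_weight_def Kh_def by (intro sum_nonneg) simp

lemma regime_moment_eq_0: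
  assumes "\<And>v. K v \<ge> 0" and "regime_weight y h K Y n i x = 0"
  shows "regime_moment y h K Y n i x = 0"
proof -
  have "\<forall>k\<in>{1..n}. Kh K h (y - Y k) * (if x (k+1) = i then 1 else 0) = 0"
    using assms sum_nonneg_eq_0_iff[of "{1..n}" "\<lambda>k. Kh K h (y - Y k) * (if x (k+1) = i then 1 else 0)"]
    by (simp add: regime_weight_def Kh_def)
  then show ?thesis by (auto simp: regime_moment_def intro!: sum.neutral)
qed

lemma sgd_Suc_nth:
  "sgd y h K Y n \<theta>0 \<gamma> X (Suc t) $ i = sgd y h K Y n \<theta>0 \<gamma> X t $ i
     - 2 / (real n * h) * \<gamma> (Suc t) * (regime_weight y h K Y n i (X (Suc t)) * sgd y h K Y n \<theta>0 \<gamma> X t $ i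
       - regime_moment y h K Y n i (X (Suc t)))"
  by (simp add: grad_U)

lemma sgd_avg_tendsto:
  assumes "sgd y h K Y n \<theta>0 \<gamma> X \<longlonglongrightarrow> \<theta>"
  shows "sgd_avg y h K Y n \<theta>0 \<gamma> X \<longlonglongrightarrow> \<theta>"
proof (rule Lim_transform_eventually[OF Cesaro_mean_tendsto[OF assms]])
  show "eventually (\<lambda>t. (1 / real t) *\<^sub>R (\<Sum>k=1..t. sgd y h K Y n \<theta>0 \<gamma> X k)
      = sgd_avg y h K Y n \<theta>0 \<gamma> X t) sequentially"
    by (intro eventually_sequentiallyI[of 1]) (simp add: sgd_avg_def)
qed

section \<open>Independent sequences in a finite set\<close>

lemma (in finite_measure) integral_finite_valued:
  fixes g :: "'b \<Rightarrow> real"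
  assumes range: "\<And>\<omega>. \<omega> \<in> space M \<Longrightarrow> Q \<omega> \<in> A" and "finite A"
    and level_sets: "\<And>a. a \<in> A \<Longrightarrow> {\<omega> \<in> space M. Q \<omega> = a} \<in> sets M"
  shows "integrable M (\<lambda>\<omega>. g (Q \<omega>))"
    and "(\<integral>\<omega>. g (Q \<omega>) \<partial>M) = (\<Sum>a\<in>A. g a * measure M {\<omega> \<in> space M. Q \<omega> = a})"
proof -
  have g_Q: "g (Q \<omega>) = (\<Sum>a\<in>A. g a * indicator {\<omega> \<in> space M. Q \<omega> = a} \<omega>)" if "\<omega> \<in> space M" for \<omega>
  proof -
    have "(\<Sum>a\<in>A. g a * indicator {\<omega> \<in> space M. Q \<omega> = a} \<omega>) = (\<Sum>a\<in>A. if a = Q \<omega> then g a else 0)"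
      using that by (intro sum.cong) auto
    then show ?thesis using range[OF that] \<open>finite A\<close> by simp
  qed
  have integrable: "integrable M (\<lambda>\<omega>. g a * indicator {\<omega> \<in> space M. Q \<omega> = a} \<omega>)" if "a \<in> A" for a
    using level_sets[OF that] by (simp add: less_top[symmetric])
  show "integrable M (\<lambda>\<omega>. g (Q \<omega>))"
    using integrable by (subst Bochner_Integration.integrable_cong[OF refl g_Q]) auto
  have "(\<integral>\<omega>. g (Q \<omega>) \<partial>M) = (\<integral>\<omega>. (\<Sum>a\<in>A. g a * indicator {\<omega> \<in> space M. Q \<omega> = a} \<omega>) \<partial>M)"
    by (rule Bochner_Integration.integral_cong[OF refl g_Q])
  also have "\<dots> = (\<Sum>a\<in>A. g a * measure M {\<omega> \<in> space M. Q \<omega> = a})"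
    using integrable by (subst Bochner_Integration.integral_sum) (auto simp: Int_absorb2)
  finally show "(\<integral>\<omega>. g (Q \<omega>) \<partial>M) = (\<Sum>a\<in>A. g a * measure M {\<omega> \<in> space M. Q \<omega> = a})" .
qed

locale finite_iid_sequence = prob_space M for M :: "'w measure" +
  fixes X :: "nat \<Rightarrow> 'w \<Rightarrow> 'a" and \<pi> :: "'a pmf" and S :: "'a set"
  assumes finite_S: "finite S"
    and measurable_X: "\<And>t. t \<ge> 1 \<Longrightarrow> X t \<in> M \<rightarrow>\<^sub>M count_space UNIV"
    and X_in_S: "\<And>t \<omega>. t \<ge> 1 \<Longrightarrow> \<omega> \<in> space M \<Longrightarrow> X t \<omega> \<in> S"
    and X_cond_law: "\<And>t A B. t \<ge> 1 \<Longrightarrow>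
          measure M {\<omega> \<in> space M. (\<lambda>s\<in>{1..<t}. X s \<omega>) \<in> A \<and> X t \<omega> \<in> B}
        = measure M {\<omega> \<in> space M. (\<lambda>s\<in>{1..<t}. X s \<omega>) \<in> A} * measure_pmf.prob \<pi> B"
begin

definition past :: "nat \<Rightarrow> 'w \<Rightarrow> nat \<Rightarrow> 'a" where
  "past j \<omega> = (\<lambda>s\<in>{1..<j}. X s \<omega>)"

lemma past_in_PiE: "\<omega> \<in> space M \<Longrightarrow> past j \<omega> \<in> PiE {1..<j} (\<lambda>_. S)"
  unfolding past_def using X_in_S by auto

lemma finite_PiE_S: "finite (PiE {1..<j::nat} (\<lambda>_. S))"
  using finite_S by (intro finite_PiE) auto

lemma sets_X_eq: "t \<ge> 1 \<Longrightarrow> {\<omega> \<in> space M. X t \<omega> = x} \<in> sets M"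
  using measurable_sets[OF measurable_X, of t "{x}"] by (simp add: vimage_def Int_def conj_commute)

lemma sets_past_eq: "{\<omega> \<in> space M. past j \<omega> = v} \<in> sets M"
proof (cases "v \<in> extensional {1..<j}")
  case True
  then have "{\<omega> \<in> space M. past j \<omega> = v} = {\<omega> \<in> space M. \<forall>s\<in>{1..<j}. X s \<omega> = v s}"
    by (auto simp: past_def extensional_def fun_eq_iff)
  also have "\<dots> \<in> sets M"
    by (intro sets.sets_Collect_finite_All sets_X_eq) auto
  finally show ?thesis .
next
  case False
  then have "{\<omega> \<in> space M. past j \<omega> = v} = {}" by (auto simp: past_def)
  then show ?thesis by (metis sets.empty_sets)
qed

lemma sets_Collect_past: "{\<omega> \<in> space M. Q (past j \<omega>)} \<in> sets M"
proof -
  have "{\<omega> \<in> space M. Q (past j \<omega>)}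
      = (\<Union>v\<in>{v \<in> PiE {1..<j} (\<lambda>_. S). Q v}. {\<omega> \<in> space M. past j \<omega> = v})"
    using past_in_PiE by auto
  also have "\<dots> \<in> sets M" using finite_PiE_S sets_past_eq by (intro sets.finite_UN) auto
  finally show ?thesis .
qed

lemma set_pmf_subset: "set_pmf \<pi> \<subseteq> S"
proof -
  \<comment> \<open>\<open>X 1\<close> never leaves \<open>S\<close>, so its law \<open>\<pi>\<close> gives \<open>- S\<close> probability zero\<close>
  have "measure_pmf.prob \<pi> (- S) = measure M {\<omega> \<in> space M. (\<lambda>s\<in>{1..<1}. X s \<omega>) \<in> UNIV \<and> X 1 \<omega> \<in> - S}"
    using X_cond_law[of 1 UNIV "- S"] by (simp add: prob_space del: Compl_iff)
  also have "{\<omega> \<in> space M. (\<lambda>s\<in>{1..<1}. X s \<omega>) \<in> UNIV \<and> X 1 \<omega> \<in> - S} = {}"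
    using X_in_S[of 1] by auto
  finally have "measure_pmf.prob \<pi> (- S) = 0" by simp
  then show ?thesis by (auto simp: measure_pmf_zero_iff)
qed

lemma expectation_eq_sum: "measure_pmf.expectation \<pi> f = (\<Sum>x\<in>S. f x * pmf \<pi> x)"
  using integral_measure_pmf[OF finite_S, of \<pi> f] set_pmf_subset by (auto simp: mult.commute)

lemma AE_X_in_set_pmf: "t \<ge> 1 \<Longrightarrow> AE \<omega> in M. X t \<omega> \<in> set_pmf \<pi>"
proof -
  assume "t \<ge> 1"
  have "{\<omega> \<in> space M. X t \<omega> \<notin> set_pmf \<pi>} \<in> sets M"
    using measurable_sets[OF measurable_X[OF \<open>t \<ge> 1\<close>], of "- set_pmf \<pi>"]
    by (simp add: vimage_def Int_def conj_commute)
  moreover have "measure M {\<omega> \<in> space M. X t \<omega> \<notin> set_pmf \<pi>} = 0"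
    using X_cond_law[OF \<open>t \<ge> 1\<close>, of UNIV "- set_pmf \<pi>"] by (simp add: measure_pmf_zero_iff)
  ultimately show ?thesis
    by (subst AE_iff_measurable[OF _ refl]) (auto simp: emeasure_eq_measure)
qed

text \<open>\<open>past_determined j \<Phi>\<close>: \<open>\<Phi>\<close> is a function of \<open>X 1, \<dots>, X (j - 1)\<close>. Since \<open>S\<close> is finite, such
  functions are simple, so no measurability or integrability side conditions arise.\<close>

definition past_determined :: "nat \<Rightarrow> ('w \<Rightarrow> real) \<Rightarrow> bool" where
  "past_determined j \<Phi> \<longleftrightarrow> (\<exists>G. \<forall>\<omega>\<in>space M. \<Phi> \<omega> = G (past j \<omega>))"

lemma past_determinedE:
  assumes "past_determined j \<Phi>"
  obtains G where "\<And>\<omega>. \<omega> \<in> space M \<Longrightarrow> \<Phi> \<omega> = G (past j \<omega>)"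
  using assms by (auto simp: past_determined_def)

lemma past_determined_integrable: "past_determined j \<Phi> \<Longrightarrow> integrable M \<Phi>"
proof (elim past_determinedE)
  fix G assume "\<And>\<omega>. \<omega> \<in> space M \<Longrightarrow> \<Phi> \<omega> = G (past j \<omega>)"
  moreover have "integrable M (\<lambda>\<omega>. G (past j \<omega>))"
    by (rule integral_finite_valued(1)[OF past_in_PiE finite_PiE_S sets_past_eq])
  ultimately show "integrable M \<Phi>"
    by (subst Bochner_Integration.integrable_cong) auto
qed

lemma past_determined_mono: "past_determined j \<Phi> \<Longrightarrow> j \<le> j' \<Longrightarrow> past_determined j' \<Phi>"
proof (elim past_determinedE)
  fix G assume G: "\<And>\<omega>. \<omega> \<in> space M \<Longrightarrow> \<Phi> \<omega> = G (past j \<omega>)" and "j \<le> j'"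
  then have "past j \<omega> = restrict (past j' \<omega>) {1..<j}" for \<omega>
    by (auto simp: past_def fun_eq_iff)
  with G show "past_determined j' \<Phi>"
    unfolding past_determined_def by (intro exI[of _ "\<lambda>v. G (restrict v {1..<j})"]) auto
qed

lemma past_determined_X: "1 \<le> s \<Longrightarrow> s < j \<Longrightarrow> past_determined j (\<lambda>\<omega>. f (X s \<omega>))"
  unfolding past_determined_def by (intro exI[of _ "\<lambda>v. f (v s)"]) (auto simp: past_def)

lemma past_determined_const: "past_determined j (\<lambda>\<omega>. c)"
  unfolding past_determined_def by (intro exI[of _ "\<lambda>_. c"]) simp

lemma past_determined_compose2:
  assumes "past_determined j \<Phi>" "past_determined j \<Psi>"
  shows "past_determined j (\<lambda>\<omega>. f (\<Phi> \<omega>) (\<Psi> \<omega>))"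
proof -
  obtain G H where "\<And>\<omega>. \<omega> \<in> space M \<Longrightarrow> \<Phi> \<omega> = G (past j \<omega>)"
    "\<And>\<omega>. \<omega> \<in> space M \<Longrightarrow> \<Psi> \<omega> = H (past j \<omega>)"
    using assms unfolding past_determined_def by blast
  then show ?thesis
    unfolding past_determined_def by (intro exI[of _ "\<lambda>v. f (G v) (H v)"]) auto
qed

lemma past_determined_compose: "past_determined j \<Phi> \<Longrightarrow> past_determined j (\<lambda>\<omega>. f (\<Phi> \<omega>))"
  using past_determined_compose2[of j \<Phi> \<Phi> "\<lambda>a b. f a"] by simp

lemma integral_past_determined_mult_X:
  assumes "j \<ge> 1" and "past_determined j \<Phi>"
  shows "(\<integral>\<omega>. \<Phi> \<omega> * f (X j \<omega>) \<partial>M) = (\<integral>\<omega>. \<Phi> \<omega> \<partial>M) * measure_pmf.expectation \<pi> f"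
proof -
  obtain G where G: "\<And>\<omega>. \<omega> \<in> space M \<Longrightarrow> \<Phi> \<omega> = G (past j \<omega>)"
    using past_determinedE[OF assms(2)] by blast
  let ?V = "PiE {1..<j} (\<lambda>_. S)"
  let ?p = "\<lambda>v. measure M {\<omega> \<in> space M. past j \<omega> = v}"
  have joint: "measure M {\<omega> \<in> space M. past j \<omega> = v \<and> X j \<omega> = x} = ?p v * pmf \<pi> x" for v x
    using X_cond_law[OF assms(1), of "{v}" "{x}"] by (simp add: past_def measure_pmf_single)
  have level: "{\<omega> \<in> space M. (past j \<omega>, X j \<omega>) = a} \<in> sets M" for a
  proof -
    have "{\<omega> \<in> space M. (past j \<omega>, X j \<omega>) = a}
        = {\<omega> \<in> space M. past j \<omega> = fst a} \<inter> {\<omega> \<in> space M. X j \<omega> = snd a}"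
      by (cases a) auto
    then show ?thesis using sets_past_eq sets_X_eq[OF assms(1)] by auto
  qed
  have "(\<integral>\<omega>. \<Phi> \<omega> * f (X j \<omega>) \<partial>M) = (\<integral>\<omega>. (\<lambda>(v, x). G v * f x) (past j \<omega>, X j \<omega>) \<partial>M)"
    by (rule Bochner_Integration.integral_cong) (simp_all add: G)
  also have "\<dots> = (\<Sum>a\<in>?V \<times> S. (\<lambda>(v, x). G v * f x) a
      * measure M {\<omega> \<in> space M. (past j \<omega>, X j \<omega>) = a})"
    using past_in_PiE X_in_S[OF assms(1)] finite_PiE_S finite_S level
    by (intro integral_finite_valued(2)) auto
  also have "\<dots> = (\<Sum>(v, x)\<in>?V \<times> S. G v * f x * (?p v * pmf \<pi> x))"
    by (intro sum.cong) (auto simp: joint)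
  also have "\<dots> = (\<Sum>v\<in>?V. \<Sum>x\<in>S. G v * ?p v * (f x * pmf \<pi> x))"
    by (simp add: sum.cartesian_product mult_ac)
  also have "\<dots> = (\<Sum>v\<in>?V. G v * ?p v) * (\<Sum>x\<in>S. f x * pmf \<pi> x)"
    by (simp add: sum_product)
  also have "(\<Sum>v\<in>?V. G v * ?p v) = (\<integral>\<omega>. \<Phi> \<omega> \<partial>M)"
    using integral_finite_valued(2)[OF past_in_PiE finite_PiE_S sets_past_eq, of G j]
    by (simp add: G cong: Bochner_Integration.integral_cong)
  finally show ?thesis by (simp add: expectation_eq_sum)
qed

definition tail_sum :: "(nat \<Rightarrow> real) \<Rightarrow> ('a \<Rightarrow> real) \<Rightarrow> nat \<Rightarrow> nat \<Rightarrow> 'w \<Rightarrow> real" where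
  "tail_sum a f N m \<omega> = (\<Sum>t\<in>{N<..m}. a t * f (X t \<omega>))"

lemma tail_sum_eq_past: "m < j \<Longrightarrow> tail_sum a f N m \<omega> = (\<Sum>t\<in>{N<..m}. a t * f (past j \<omega> t))"
  unfolding tail_sum_def past_def by (intro sum.cong) auto

lemma past_determined_tail_sum: "past_determined (Suc m) (tail_sum a f N m)"
  unfolding past_determined_def
  by (intro exI[of _ "\<lambda>v. \<Sum>t\<in>{N<..m}. a t * f (v t)"]) (simp add: tail_sum_eq_past)

lemma tail_sum_self [simp]: "tail_sum a f N N \<omega> = 0"
  by (simp add: tail_sum_def)

lemma tail_sum_Suc:
  "N \<le> m \<Longrightarrow> tail_sum a f N (Suc m) \<omega> = tail_sum a f N m \<omega> + a (Suc m) * f (X (Suc m) \<omega>)"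
proof -
  assume "N \<le> m"
  then have "{N<..Suc m} = insert (Suc m) {N<..m}" by auto
  then show ?thesis by (simp add: tail_sum_def)
qed

lemma sets_tail_sum_ge: "{\<omega> \<in> space M. c \<le> \<bar>tail_sum a f N m \<omega>\<bar>} \<in> sets M"
  using sets_Collect_past[of "\<lambda>v. c \<le> \<bar>\<Sum>t\<in>{N<..m}. a t * f (v t)\<bar>" "Suc m"]
  by (simp add: tail_sum_eq_past[where j = "Suc m"])

lemma integral_tail_sum_Suc_square:
  assumes "N \<le> m" and \<Phi>: "past_determined (Suc m) \<Phi>"
    and mean_zero: "measure_pmf.expectation \<pi> f = 0"
  shows "(\<integral>\<omega>. (tail_sum a f N (Suc m) \<omega>)\<^sup>2 * \<Phi> \<omega> \<partial>M)
       = (\<integral>\<omega>. (tail_sum a f N m \<omega>)\<^sup>2 * \<Phi> \<omega> \<partial>M) + (\<integral>\<omega>. (a (Suc m) * f (X (Suc m) \<omega>))\<^sup>2 * \<Phi> \<omega> \<partial>M)"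
proof -
  let ?T = "tail_sum a f N m" and ?D = "\<lambda>\<omega>. a (Suc m) * f (X (Suc m) \<omega>)"
  have T\<Phi>: "past_determined (Suc m) (\<lambda>\<omega>. ?T \<omega> * \<Phi> \<omega>)"
    using past_determined_tail_sum \<Phi> by (rule past_determined_compose2)
  have square: "(tail_sum a f N (Suc m) \<omega>)\<^sup>2 * \<Phi> \<omega>
      = (?T \<omega>)\<^sup>2 * \<Phi> \<omega> + 2 * a (Suc m) * (?T \<omega> * \<Phi> \<omega> * f (X (Suc m) \<omega>)) + (?D \<omega>)\<^sup>2 * \<Phi> \<omega>" for \<omega>
    using assms(1) by (simp add: tail_sum_Suc power2_eq_square algebra_simps)
  \<comment> \<open>the cross term vanishes: \<open>X (Suc m)\<close> is independent of the past and \<open>f\<close> has mean zero\<close>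
  have cross: "(\<integral>\<omega>. ?T \<omega> * \<Phi> \<omega> * f (X (Suc m) \<omega>) \<partial>M) = 0"
    using integral_past_determined_mult_X[OF _ T\<Phi>, of f] mean_zero by simp
  have past: "past_determined (Suc (Suc m)) \<Phi>" "past_determined (Suc (Suc m)) ?T"
    "past_determined (Suc (Suc m)) ?D" "past_determined (Suc (Suc m)) (\<lambda>\<omega>. f (X (Suc m) \<omega>))"
    using past_determined_mono[OF \<Phi>] past_determined_mono[OF past_determined_tail_sum]
      past_determined_X[where s = "Suc m" and f = "\<lambda>x. a (Suc m) * f x"]
      past_determined_X[where s = "Suc m" and f = f] by simp_all
  have integrable: "integrable M (\<lambda>\<omega>. (?T \<omega>)\<^sup>2 * \<Phi> \<omega>)"
      "integrable M (\<lambda>\<omega>. 2 * a (Suc m) * (?T \<omega> * \<Phi> \<omega> * f (X (Suc m) \<omega>)))"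
      "integrable M (\<lambda>\<omega>. (?D \<omega>)\<^sup>2 * \<Phi> \<omega>)"
    using past_determined_compose2[OF past(2,1), of "\<lambda>x y. x\<^sup>2 * y"]
      past_determined_compose2[OF past_determined_compose2[OF past(2,1), of "(*)"] past(4),
        of "\<lambda>x y. 2 * a (Suc m) * (x * y)"]
      past_determined_compose2[OF past(3,1), of "\<lambda>x y. x\<^sup>2 * y"]
    by (blast dest: past_determined_integrable)+
  show ?thesis
    unfolding square
    by (simp only: Bochner_Integration.integral_add[OF Bochner_Integration.integrable_add[OF integrable(1,2)]
        integrable(3)] Bochner_Integration.integral_add[OF integrable(1,2)] integral_mult_right_zero cross
        mult_zero_right add_0_right)
qed

lemma integral_tail_sum_square:
  assumes "N \<le> k" "k \<le> m" and "past_determined (Suc k) \<Phi>"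
    and mean_zero: "measure_pmf.expectation \<pi> f = 0"
  shows "(\<integral>\<omega>. (tail_sum a f N m \<omega>)\<^sup>2 * \<Phi> \<omega> \<partial>M)
       = (\<integral>\<omega>. (tail_sum a f N k \<omega>)\<^sup>2 * \<Phi> \<omega> \<partial>M)
         + (\<Sum>t\<in>{k<..m}. \<integral>\<omega>. (a t * f (X t \<omega>))\<^sup>2 * \<Phi> \<omega> \<partial>M)"
  using \<open>k \<le> m\<close>
proof (induction m rule: dec_induct)
  case (step m)
  have "past_determined (Suc m) \<Phi>"
    by (rule past_determined_mono[OF assms(3)]) (use step(1) in simp)
  moreover have "{k<..Suc m} = insert (Suc m) {k<..m}" using step(1) by auto
  ultimately show ?case
    using integral_tail_sum_Suc_square[OF _ _ mean_zero, of N m \<Phi> a] assms(1) step by simp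
qed simp

lemma integral_tail_sum_square_mono:
  assumes "N \<le> k" "k \<le> m" "past_determined (Suc k) \<Phi>" "\<And>\<omega>. \<Phi> \<omega> \<ge> 0"
    and "measure_pmf.expectation \<pi> f = 0"
  shows "(\<integral>\<omega>. (tail_sum a f N k \<omega>)\<^sup>2 * \<Phi> \<omega> \<partial>M) \<le> (\<integral>\<omega>. (tail_sum a f N m \<omega>)\<^sup>2 * \<Phi> \<omega> \<partial>M)"
  unfolding integral_tail_sum_square[OF assms(1-3,5)]
  using assms(4) by (intro le_add_same_cancel1[THEN iffD2] sum_nonneg integral_nonneg) auto

lemma integral_tail_sum_square_le:
  assumes "N \<le> L" and "measure_pmf.expectation \<pi> f = 0" and bound: "\<And>x. x \<in> S \<Longrightarrow> \<bar>f x\<bar> \<le> B"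
  shows "(\<integral>\<omega>. (tail_sum a f N L \<omega>)\<^sup>2 \<partial>M) \<le> B\<^sup>2 * (\<Sum>t\<in>{N<..L}. (a t)\<^sup>2)"
proof -
  have "(\<integral>\<omega>. (a t * f (X t \<omega>))\<^sup>2 \<partial>M) \<le> B\<^sup>2 * (a t)\<^sup>2" if "t \<in> {N<..L}" for t
  proof -
    have "(a t * f (X t \<omega>))\<^sup>2 \<le> B\<^sup>2 * (a t)\<^sup>2" if "\<omega> \<in> space M" for \<omega>
    proof -
      have "\<bar>f (X t \<omega>)\<bar> \<le> B" using bound X_in_S[of t \<omega>] \<open>t \<in> {N<..L}\<close> that by auto
      from power_mono[OF this abs_ge_zero, of 2]
      have "(a t)\<^sup>2 * (f (X t \<omega>))\<^sup>2 \<le> (a t)\<^sup>2 * B\<^sup>2" by (intro mult_left_mono) simp_all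
      then show ?thesis by (simp add: power_mult_distrib mult.commute)
    qed
    then have "(\<integral>\<omega>. (a t * f (X t \<omega>))\<^sup>2 \<partial>M) \<le> (\<integral>\<omega>. B\<^sup>2 * (a t)\<^sup>2 \<partial>M)"
      using that by (intro integral_mono_AE AE_I2 past_determined_integrable[OF past_determined_X]) auto
    then show ?thesis by (simp add: prob_space)
  qed
  then show ?thesis
    using integral_tail_sum_square[OF order.refl assms(1) past_determined_const assms(2), of a 1]
    by (simp add: sum_distrib_left) (rule sum_mono, simp)
qed

definition first_exceedance :: "real \<Rightarrow> (nat \<Rightarrow> real) \<Rightarrow> ('a \<Rightarrow> real) \<Rightarrow> nat \<Rightarrow> nat \<Rightarrow> 'w \<Rightarrow> real" where
  "first_exceedance \<epsilon> a f N k \<omega> =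
     of_bool (\<epsilon> \<le> \<bar>tail_sum a f N k \<omega>\<bar> \<and> (\<forall>j\<in>{N<..<k}. \<not> \<epsilon> \<le> \<bar>tail_sum a f N j \<omega>\<bar>))"

lemma past_determined_first_exceedance: "past_determined (Suc k) (first_exceedance \<epsilon> a f N k)"
proof -
  have "tail_sum a f N j \<omega> = (\<Sum>t\<in>{N<..j}. a t * f (past (Suc k) \<omega> t))" if "j \<le> k" for j \<omega>
    using that by (intro tail_sum_eq_past) simp
  then show ?thesis
    unfolding past_determined_def first_exceedance_def
    by (intro exI[of _ "\<lambda>v. of_bool (\<epsilon> \<le> \<bar>\<Sum>t\<in>{N<..k}. a t * f (v t)\<bar>
        \<and> (\<forall>j\<in>{N<..<k}. \<not> \<epsilon> \<le> \<bar>\<Sum>t\<in>{N<..j}. a t * f (v t)\<bar>))"]) simp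
qed

lemma measure_exceedance_eq_sum:
  "measure M {\<omega> \<in> space M. \<exists>m\<in>{N<..L}. \<epsilon> \<le> \<bar>tail_sum a f N m \<omega>\<bar>}
     = (\<Sum>k\<in>{N<..L}. \<integral>\<omega>. first_exceedance \<epsilon> a f N k \<omega> \<partial>M)"
  (is "measure M ?E = _")
proof -
  have "?E \<in> sets M" by (intro sets.sets_Collect_finite_Ex sets_tail_sum_ge) simp
  then have "measure M ?E = (\<integral>\<omega>. indicator ?E \<omega> \<partial>M)"
    by (simp add: Int_absorb2 sets.sets_into_space)
  also have "\<dots> = (\<integral>\<omega>. (\<Sum>k\<in>{N<..L}. first_exceedance \<epsilon> a f N k \<omega>) \<partial>M)"
    using sum_first_exceedance[where N = N and L = L and P = "\<lambda>k. \<epsilon> \<le> \<bar>tail_sum a f N k _\<bar>"]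
    by (intro Bochner_Integration.integral_cong) (simp_all add: first_exceedance_def indicator_def)
  also have "\<dots> = (\<Sum>k\<in>{N<..L}. \<integral>\<omega>. first_exceedance \<epsilon> a f N k \<omega> \<partial>M)"
    by (rule Bochner_Integration.integral_sum)
      (rule past_determined_integrable[OF past_determined_first_exceedance])
  finally show ?thesis .
qed

lemma kolmogorov_maximal_inequality:
  assumes "\<epsilon> > 0" and mean_zero: "measure_pmf.expectation \<pi> f = 0"
  shows "\<epsilon>\<^sup>2 * measure M {\<omega> \<in> space M. \<exists>m\<in>{N<..L}. \<epsilon> \<le> \<bar>tail_sum a f N m \<omega>\<bar>}
       \<le> (\<integral>\<omega>. (tail_sum a f N L \<omega>)\<^sup>2 \<partial>M)"
proof -
  let ?T = "tail_sum a f N" and ?first = "first_exceedance \<epsilon> a f N"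
  have integrable: "integrable M (\<lambda>\<omega>. (?T m \<omega>)\<^sup>2 * ?first k \<omega>)" if "k \<le> m" for k m
  proof -
    have "past_determined (Suc m) (?first k)"
      using past_determined_first_exceedance by (rule past_determined_mono) (simp add: that)
    from past_determined_compose2[OF past_determined_tail_sum this, of "\<lambda>x y. x\<^sup>2 * y"]
    show ?thesis by (rule past_determined_integrable)
  qed
  have "\<epsilon>\<^sup>2 * measure M {\<omega> \<in> space M. \<exists>m\<in>{N<..L}. \<epsilon> \<le> \<bar>?T m \<omega>\<bar>}
      = (\<Sum>k\<in>{N<..L}. \<integral>\<omega>. \<epsilon>\<^sup>2 * ?first k \<omega> \<partial>M)"
    by (simp add: measure_exceedance_eq_sum sum_distrib_left)
  also have "\<dots> \<le> (\<Sum>k\<in>{N<..L}. \<integral>\<omega>. (?T k \<omega>)\<^sup>2 * ?first k \<omega> \<partial>M)"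
  proof (intro sum_mono integral_mono)
    fix k \<omega>
    have "\<epsilon>\<^sup>2 \<le> (?T k \<omega>)\<^sup>2" if "\<epsilon> \<le> \<bar>?T k \<omega>\<bar>"
      using power_mono[OF that, of 2] \<open>\<epsilon> > 0\<close> by simp
    then show "\<epsilon>\<^sup>2 * ?first k \<omega> \<le> (?T k \<omega>)\<^sup>2 * ?first k \<omega>"
      by (simp add: first_exceedance_def)
    show "integrable M (\<lambda>\<omega>. \<epsilon>\<^sup>2 * ?first k \<omega>)"
      by (rule past_determined_integrable[OF past_determined_compose[OF past_determined_first_exceedance]])
  qed (rule integrable, simp)
  also have "\<dots> \<le> (\<Sum>k\<in>{N<..L}. \<integral>\<omega>. (?T L \<omega>)\<^sup>2 * ?first k \<omega> \<partial>M)"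
    by (intro sum_mono integral_tail_sum_square_mono[OF _ _ past_determined_first_exceedance _ mean_zero])
      (auto simp: first_exceedance_def)
  also have "\<dots> = (\<integral>\<omega>. (\<Sum>k\<in>{N<..L}. (?T L \<omega>)\<^sup>2 * ?first k \<omega>) \<partial>M)"
    using integrable by (intro Bochner_Integration.integral_sum[symmetric]) simp
  also have "\<dots> \<le> (\<integral>\<omega>. (?T L \<omega>)\<^sup>2 \<partial>M)"
  proof (rule integral_mono)
    show "(\<Sum>k\<in>{N<..L}. (?T L \<omega>)\<^sup>2 * ?first k \<omega>) \<le> (?T L \<omega>)\<^sup>2" for \<omega>
      using sum_first_exceedance[where N = N and L = L and P = "\<lambda>k. \<epsilon> \<le> \<bar>?T k \<omega>\<bar>"]
      by (simp add: sum_distrib_left[symmetric] first_exceedance_def)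
  qed (use integrable past_determined_integrable[OF past_determined_compose[OF past_determined_tail_sum]] in auto)
  finally show ?thesis .
qed

lemma prob_tail_sums_exceed:
  assumes "\<epsilon> > 0" and mean_zero: "measure_pmf.expectation \<pi> f = 0"
    and bound: "\<And>x. x \<in> S \<Longrightarrow> \<bar>f x\<bar> \<le> B" and square_summable: "summable (\<lambda>t. (a t)\<^sup>2)"
  shows "measure M {\<omega> \<in> space M. \<exists>m>N. \<epsilon> \<le> \<bar>tail_sum a f N m \<omega>\<bar>}
      \<le> B\<^sup>2 * (suminf (\<lambda>t. (a t)\<^sup>2) - (\<Sum>t\<le>N. (a t)\<^sup>2)) / \<epsilon>\<^sup>2"
proof -
  define E where "E L = {\<omega> \<in> space M. \<exists>m\<in>{N<..L}. \<epsilon> \<le> \<bar>tail_sum a f N m \<omega>\<bar>}" for L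
  have "(\<lambda>L. measure M (E L)) \<longlonglongrightarrow> measure M (\<Union>L. E L)"
  proof (rule finite_Lim_measure_incseq)
    show "range E \<subseteq> sets M"
      unfolding E_def by (auto intro!: sets.sets_Collect_finite_Ex sets_tail_sum_ge)
    show "incseq E" by (rule monoI) (auto simp: E_def)
  qed
  moreover have "(\<Union>L. E L) = {\<omega> \<in> space M. \<exists>m>N. \<epsilon> \<le> \<bar>tail_sum a f N m \<omega>\<bar>}"
    by (auto simp: E_def) (use greaterThanAtMost_iff in blast)
  ultimately have limit: "(\<lambda>L. measure M (E L))
      \<longlonglongrightarrow> measure M {\<omega> \<in> space M. \<exists>m>N. \<epsilon> \<le> \<bar>tail_sum a f N m \<omega>\<bar>}" by simp
  show ?thesis
  proof (rule LIMSEQ_le_const2[OF limit], intro exI allI impI)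
    fix L assume "L \<ge> N"
    have "\<epsilon>\<^sup>2 * measure M (E L) \<le> (\<integral>\<omega>. (tail_sum a f N L \<omega>)\<^sup>2 \<partial>M)"
      unfolding E_def using \<open>\<epsilon> > 0\<close> mean_zero by (rule kolmogorov_maximal_inequality)
    also have "\<dots> \<le> B\<^sup>2 * (\<Sum>t\<in>{N<..L}. (a t)\<^sup>2)"
      using \<open>L \<ge> N\<close> mean_zero bound by (rule integral_tail_sum_square_le)
    also have "\<dots> \<le> B\<^sup>2 * (suminf (\<lambda>t. (a t)\<^sup>2) - (\<Sum>t\<le>N. (a t)\<^sup>2))"
      using square_summable \<open>L \<ge> N\<close>
      by (intro mult_left_mono sum_greaterThanAtMost_le_tail_suminf) simp_all
    finally show "measure M (E L) \<le> B\<^sup>2 * (suminf (\<lambda>t. (a t)\<^sup>2) - (\<Sum>t\<le>N. (a t)\<^sup>2)) / \<epsilon>\<^sup>2"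
      using \<open>\<epsilon> > 0\<close> by (simp add: pos_le_divide_eq mult.commute)
  qed
qed

lemma tail_sums_exceed_infinitely_often_null:
  fixes f :: "'a \<Rightarrow> real"
  assumes "c > 0" and mean_zero: "measure_pmf.expectation \<pi> f = 0"
    and square_summable: "summable (\<lambda>t. (a t)\<^sup>2)"
  shows "{\<omega> \<in> space M. \<forall>N. \<exists>m>N. c \<le> \<bar>tail_sum a f N m \<omega>\<bar>} \<in> null_sets M"
proof -
  define bad where "bad = {\<omega> \<in> space M. \<forall>N. \<exists>m>N. c \<le> \<bar>tail_sum a f N m \<omega>\<bar>}"
  define B where "B = (\<Sum>x\<in>S. \<bar>f x\<bar>)"
  have bound: "\<bar>f x\<bar> \<le> B" if "x \<in> S" for x
    unfolding B_def using finite_S that by (intro member_le_sum) simp_all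
  have level: "{\<omega> \<in> space M. N < m \<and> c \<le> \<bar>tail_sum a f N m \<omega>\<bar>} \<in> sets M" for N m
    by (cases "N < m") (simp_all add: sets_tail_sum_ge)
  have "bad \<in> sets M"
    unfolding bad_def by (intro sets.sets_Collect_countable_All sets.sets_Collect_countable_Ex level)
  have "measure M bad \<le> B\<^sup>2 / c\<^sup>2 * (suminf (\<lambda>t. (a t)\<^sup>2) - (\<Sum>t\<le>N. (a t)\<^sup>2))" for N
  proof -
    have "measure M bad \<le> measure M {\<omega> \<in> space M. \<exists>m>N. c \<le> \<bar>tail_sum a f N m \<omega>\<bar>}"
      unfolding bad_def by (intro finite_measure_mono sets.sets_Collect_countable_Ex level) auto
    also have "\<dots> \<le> B\<^sup>2 * (suminf (\<lambda>t. (a t)\<^sup>2) - (\<Sum>t\<le>N. (a t)\<^sup>2)) / c\<^sup>2"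
      using \<open>c > 0\<close> mean_zero bound square_summable by (rule prob_tail_sums_exceed)
    finally show ?thesis by simp
  qed
  then have "measure M bad \<le> 0"
    by (intro LIMSEQ_le_const[OF tendsto_mult_right_zero[OF tail_suminf_tendsto_zero[OF square_summable],
          of "B\<^sup>2 / c\<^sup>2"]]) blast
  with \<open>bad \<in> sets M\<close> have "bad \<in> null_sets M"
    by (simp add: null_sets_def emeasure_eq_measure measure_le_0_iff)
  then show ?thesis unfolding bad_def .
qed

lemma AE_summable_weighted:
  fixes f :: "'a \<Rightarrow> real"
  assumes mean_zero: "measure_pmf.expectation \<pi> f = 0" and square_summable: "summable (\<lambda>t. (a t)\<^sup>2)"
  shows "AE \<omega> in M. summable (\<lambda>t. a t * f (X t \<omega>))"
proof -
  have "AE \<omega> in M. \<forall>j::nat. \<omega> \<notin> {\<omega> \<in> space M. \<forall>N. \<exists>m>N. 1 / Suc j \<le> \<bar>tail_sum a f N m \<omega>\<bar>}"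
    unfolding AE_all_countable
    by (intro allI AE_not_in tail_sums_exceed_infinitely_often_null mean_zero square_summable) simp
  then show ?thesis
  proof (rule AE_mp, intro AE_I2 impI)
    fix \<omega> assume "\<omega> \<in> space M"
      and good: "\<forall>j::nat. \<omega> \<notin> {\<omega> \<in> space M. \<forall>N. \<exists>m>N. 1 / Suc j \<le> \<bar>tail_sum a f N m \<omega>\<bar>}"
    show "summable (\<lambda>t. a t * f (X t \<omega>))"
    proof (rule summable_if_tail_sums_vanish)
      fix \<epsilon> :: real assume "\<epsilon> > 0"
      then obtain j where j: "1 / real (Suc j) < \<epsilon>"
        using reals_Archimedean by (auto simp: inverse_eq_divide)
      from good \<open>\<omega> \<in> space M\<close> obtain N where N: "\<forall>m>N. \<not> 1 / Suc j \<le> \<bar>tail_sum a f N m \<omega>\<bar>"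
        by blast
      have "\<bar>tail_sum a f N m \<omega>\<bar> < \<epsilon>" if "m \<ge> N" for m
      proof (cases "m = N")
        case False
        then show ?thesis using N that j by (metis le_neq_implies_less not_le order.strict_trans)
      qed (simp add: \<open>\<epsilon> > 0\<close>)
      then show "\<exists>N. \<forall>m\<ge>N. \<bar>\<Sum>t\<in>{N<..m}. a t * f (X t \<omega>)\<bar> < \<epsilon>"
        by (auto simp: tail_sum_def)
    qed
  qed
qed

section \<open>Linear stochastic approximation\<close>

lemma expectation_diff_mult:
  fixes f g :: "'a \<Rightarrow> real"
  shows "measure_pmf.expectation \<pi> (\<lambda>x. f x - c * g x)
     = measure_pmf.expectation \<pi> f - c * measure_pmf.expectation \<pi> g"
  using integrable_measure_pmf_finite[OF finite_subset[OF set_pmf_subset finite_S]]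
  by (subst Bochner_Integration.integral_diff) auto

lemma eventually_step_size_le_1:
  fixes a :: "nat \<Rightarrow> real" and s :: "'a \<Rightarrow> real"
  assumes "\<omega> \<in> space M" and a_pos: "\<And>t. a t > 0" and "a \<longlonglongrightarrow> 0"
    and s_nonneg: "\<And>x. x \<in> S \<Longrightarrow> s x \<ge> 0"
  shows "eventually (\<lambda>t. 0 \<le> a t * s (X t \<omega>) \<and> a t * s (X t \<omega>) \<le> 1) sequentially"
proof -
  define W where "W = (\<Sum>x\<in>S. s x)"
  have s_bound: "0 \<le> s (X t \<omega>) \<and> s (X t \<omega>) \<le> W" if "t \<ge> 1" for t
  proof -
    have "X t \<omega> \<in> S" using X_in_S[OF that assms(1)] .
    moreover from this have "s (X t \<omega>) \<le> W"
      unfolding W_def by (rule member_le_sum) (simp_all add: s_nonneg finite_S)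
    ultimately show ?thesis using s_nonneg by blast
  qed
  then have "W \<ge> 0" by fastforce
  then have "eventually (\<lambda>t. a t < 1 / (W + 1)) sequentially"
    by (intro order_tendstoD(2)[OF \<open>a \<longlonglongrightarrow> 0\<close>]) simp
  then have "eventually (\<lambda>t. a t < 1 / (W + 1) \<and> t \<ge> 1) sequentially"
    using eventually_ge_at_top[of 1] by (rule eventually_conj)
  then show ?thesis
  proof (rule eventually_mono)
    fix t assume t: "a t < 1 / (W + 1) \<and> t \<ge> 1"
    then have bounds: "0 \<le> s (X t \<omega>)" "s (X t \<omega>) \<le> W" using s_bound by auto
    have "a t * s (X t \<omega>) \<le> a t * (W + 1)"
      using bounds a_pos[of t] by (intro mult_left_mono) auto
    also have "\<dots> \<le> 1" using t \<open>W \<ge> 0\<close> by (simp add: less_divide_eq)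
    finally show "0 \<le> a t * s (X t \<omega>) \<and> a t * s (X t \<omega>) \<le> 1"
      using bounds a_pos[of t] by simp
  qed
qed

lemma linear_recursion_tendsto:
  fixes a :: "nat \<Rightarrow> real" and s r :: "'a \<Rightarrow> real" and \<theta> :: "'w \<Rightarrow> nat \<Rightarrow> real"
  assumes a_pos: "\<And>t. a t > 0" and not_summable: "\<not> summable a"
    and square_summable: "summable (\<lambda>t. (a t)\<^sup>2)"
    and s_nonneg: "\<And>x. x \<in> S \<Longrightarrow> s x \<ge> 0"
    and s_mean_pos: "measure_pmf.expectation \<pi> s > 0"
    and recursion: "\<And>\<omega> t. \<theta> \<omega> (Suc t) = \<theta> \<omega> t - a (Suc t) * (s (X (Suc t) \<omega>) * \<theta> \<omega> t - r (X (Suc t) \<omega>))"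
  shows "AE \<omega> in M. \<theta> \<omega> \<longlonglongrightarrow> measure_pmf.expectation \<pi> r / measure_pmf.expectation \<pi> s"
proof -
  let ?E = "measure_pmf.expectation \<pi>"
  define c where "c = ?E r / ?E s"
  have "?E (\<lambda>x. r x - c * s x) = 0"
    using s_mean_pos unfolding expectation_diff_mult c_def by simp
  from AE_summable_weighted[OF this square_summable]
  have "AE \<omega> in M. summable (\<lambda>t. a t * (r (X t \<omega>) - c * s (X t \<omega>)))" .
  moreover have "?E (\<lambda>x. s x - ?E s) = 0"
    using expectation_diff_mult[of s "?E s" "\<lambda>_. 1"] by simp
  from AE_summable_weighted[OF this square_summable]
  have "AE \<omega> in M. summable (\<lambda>t. a t * (s (X t \<omega>) - ?E s))" .
  ultimately show ?thesis using AE_space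
  proof eventually_elim
    case (elim \<omega>)
    have q: "eventually (\<lambda>t. 0 \<le> a t * s (X t \<omega>) \<and> a t * s (X t \<omega>) \<le> 1) sequentially"
      using elim(3) a_pos tendsto_zero_if_square_summable[OF square_summable] s_nonneg
      by (rule eventually_step_size_le_1)
    have "\<not> summable (\<lambda>t. a t * s (X t \<omega>))"
    proof
      assume "summable (\<lambda>t. a t * s (X t \<omega>))"
      from summable_diff[OF this elim(2)] have "summable (\<lambda>t. ?E s * a t)"
        by (simp add: algebra_simps)
      then have "summable a" using summable_cmult_iff[of "?E s" a] s_mean_pos by simp
      then show False using not_summable by simp
    qed
    then have "(\<lambda>t. \<theta> \<omega> t - c) \<longlonglongrightarrow> 0"
    proof (rule perturbed_contraction_tendsto_zero[OF q _ elim(1)])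
      show "\<theta> \<omega> (Suc t) - c = (1 - a (Suc t) * s (X (Suc t) \<omega>)) * (\<theta> \<omega> t - c)
          + a (Suc t) * (r (X (Suc t) \<omega>) - c * s (X (Suc t) \<omega>))" for t
        by (simp add: recursion algebra_simps)
    qed
    then show ?case by (simp add: LIM_zero_iff c_def)
  qed
qed

lemma linear_recursion_degenerate:
  fixes s r :: "'a \<Rightarrow> real" and \<theta> :: "'w \<Rightarrow> nat \<Rightarrow> real"
  assumes s_nonneg: "\<And>x. x \<in> S \<Longrightarrow> s x \<ge> 0"
    and r_vanishes: "\<And>x. x \<in> S \<Longrightarrow> s x = 0 \<Longrightarrow> r x = 0"
    and s_mean_zero: "measure_pmf.expectation \<pi> s = 0"
    and recursion: "\<And>\<omega> t. \<theta> \<omega> (Suc t) = \<theta> \<omega> t - a (Suc t) * (s (X (Suc t) \<omega>) * \<theta> \<omega> t - r (X (Suc t) \<omega>))"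
  shows "measure_pmf.expectation \<pi> r = 0" and "AE \<omega> in M. \<theta> \<omega> \<longlonglongrightarrow> \<theta> \<omega> 0"
proof -
  have support: "s x = 0 \<and> r x = 0" if "x \<in> set_pmf \<pi>" for x
  proof -
    have "x \<in> S" using that set_pmf_subset by auto
    have "\<forall>z\<in>S. s z * pmf \<pi> z = 0"
      using sum_nonneg_eq_0_iff[OF finite_S, of "\<lambda>z. s z * pmf \<pi> z"] s_mean_zero s_nonneg
      by (simp add: expectation_eq_sum)
    then have "s x = 0" using \<open>x \<in> S\<close> that by (auto simp: set_pmf_iff)
    then show ?thesis using r_vanishes \<open>x \<in> S\<close> by simp
  qed
  then show "measure_pmf.expectation \<pi> r = 0"
    unfolding expectation_eq_sum by (intro sum.neutral) (auto simp: set_pmf_iff)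
  have "AE \<omega> in M. \<forall>t. X (Suc t) \<omega> \<in> set_pmf \<pi>"
    unfolding AE_all_countable by (intro allI AE_X_in_set_pmf) simp
  then show "AE \<omega> in M. \<theta> \<omega> \<longlonglongrightarrow> \<theta> \<omega> 0"
  proof (rule eventually_mono)
    fix \<omega> assume X: "\<forall>t. X (Suc t) \<omega> \<in> set_pmf \<pi>"
    have stationary: "\<theta> \<omega> t = \<theta> \<omega> 0" for t
    proof (induction t)
      case (Suc t)
      have "s (X (Suc t) \<omega>) = 0" "r (X (Suc t) \<omega>) = 0" using support X by auto
      with Suc.IH show ?case by (simp add: recursion)
    qed simp
    show "\<theta> \<omega> \<longlonglongrightarrow> \<theta> \<omega> 0"
      by (rule Lim_transform_eventually[OF tendsto_const]) (intro always_eventually allI stationary[symmetric])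
  qed
qed

lemma linear_recursion_converges:
  fixes a :: "nat \<Rightarrow> real" and s r :: "'a \<Rightarrow> real" and \<theta> :: "'w \<Rightarrow> nat \<Rightarrow> real"
  assumes "\<And>t. a t > 0" and "\<not> summable a" and "summable (\<lambda>t. (a t)\<^sup>2)"
    and s_nonneg: "\<And>x. x \<in> S \<Longrightarrow> s x \<ge> 0"
    and "\<And>x. x \<in> S \<Longrightarrow> s x = 0 \<Longrightarrow> r x = 0"
    and "\<And>\<omega> t. \<theta> \<omega> (Suc t) = \<theta> \<omega> t - a (Suc t) * (s (X (Suc t) \<omega>) * \<theta> \<omega> t - r (X (Suc t) \<omega>))"
  shows "AE \<omega> in M. \<exists>L. \<theta> \<omega> \<longlonglongrightarrow> L
    \<and> measure_pmf.expectation \<pi> s * L = measure_pmf.expectation \<pi> r"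
proof (cases "measure_pmf.expectation \<pi> s > 0")
  case True
  have "AE \<omega> in M. \<theta> \<omega> \<longlonglongrightarrow> measure_pmf.expectation \<pi> r / measure_pmf.expectation \<pi> s"
    using linear_recursion_tendsto[where a = a and s = s and r = r and \<theta> = \<theta>] assms(1-4) True assms(6)
    by blast
  then show ?thesis
  proof (rule eventually_mono)
    fix \<omega> assume "\<theta> \<omega> \<longlonglongrightarrow> measure_pmf.expectation \<pi> r / measure_pmf.expectation \<pi> s"
    moreover have "measure_pmf.expectation \<pi> s * (measure_pmf.expectation \<pi> r / measure_pmf.expectation \<pi> s)
        = measure_pmf.expectation \<pi> r"
      using True[THEN less_imp_neq, symmetric] by (metis times_divide_eq_right nonzero_mult_div_cancel_left)
    ultimately show "\<exists>L. \<theta> \<omega> \<longlonglongrightarrow> L \<and> measure_pmf.expectation \<pi> s * L = measure_pmf.expectation \<pi> r"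
      by blast
  qed
next
  case False
  moreover have "measure_pmf.expectation \<pi> s \<ge> 0"
    unfolding expectation_eq_sum using s_nonneg by (intro sum_nonneg) simp
  ultimately have "measure_pmf.expectation \<pi> s = 0" by simp
  note degenerate = linear_recursion_degenerate[where a = a and s = s and r = r and \<theta> = \<theta>,
      OF assms(4,5) this assms(6)]
  from degenerate(2) show ?thesis
  proof (rule eventually_mono)
    fix \<omega> assume "\<theta> \<omega> \<longlonglongrightarrow> \<theta> \<omega> 0"
    moreover have "measure_pmf.expectation \<pi> s * \<theta> \<omega> 0 = measure_pmf.expectation \<pi> r"
      by (simp only: degenerate(1) \<open>measure_pmf.expectation \<pi> s = 0\<close> mult_zero_left)
    ultimately show "\<exists>L. \<theta> \<omega> \<longlonglongrightarrow> L \<and> measure_pmf.expectation \<pi> s * L = measure_pmf.expectation \<pi> r"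
      by blast
  qed
qed

end

section \<open>Averaged stochastic gradient descent\<close>

lemma sgd_coordinate_converges:
  assumes iid: "finite_iid_sequence M X \<pi> S"
    and "h > 0" "n \<ge> 1" and K_nonneg: "\<And>v. K v \<ge> 0"
    and gamma_pos: "\<And>t. \<gamma> t > 0" and "\<not> summable \<gamma>" and "summable (\<lambda>t. (\<gamma> t)\<^sup>2)"
  shows "AE \<omega> in M. \<exists>L. (\<lambda>t. sgd y h K Y n \<theta>0 \<gamma> (\<lambda>s. X s \<omega>) t $ i) \<longlonglongrightarrow> L
    \<and> measure_pmf.expectation \<pi> (regime_weight y h K Y n i) * L
      = measure_pmf.expectation \<pi> (regime_moment y h K Y n i)"
proof -
  interpret finite_iid_sequence M X \<pi> S by (fact iid)
  have c_pos: "2 / (real n * h) > 0" using assms(2,3) by simp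
  show ?thesis
  proof (rule linear_recursion_converges[where a = "\<lambda>t. 2 / (real n * h) * \<gamma> t"])
    show "\<not> summable (\<lambda>t. 2 / (real n * h) * \<gamma> t)"
      using assms(6) c_pos summable_cmult_iff by (metis less_irrefl)
    show "summable (\<lambda>t. (2 / (real n * h) * \<gamma> t)\<^sup>2)"
      using summable_mult[OF assms(7), of "(2 / (real n * h))\<^sup>2"] by (simp only: power_mult_distrib)
    show "2 / (real n * h) * \<gamma> t > 0" for t
      using c_pos gamma_pos[of t] by (rule mult_pos_pos)
  qed (simp_all add: K_nonneg regime_weight_nonneg regime_moment_eq_0 sgd_Suc_nth del: sgd.simps)
qed

lemma sgd_avg_tendsto_critical_point:
  assumes "\<forall>i\<in>UNIV. \<exists>L. (\<lambda>t. sgd y h K Y n \<theta>0 \<gamma> Z t $ i) \<longlonglongrightarrow> L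
    \<and> measure_pmf.expectation \<pi> (regime_weight y h K Y n i) * L
      = measure_pmf.expectation \<pi> (regime_moment y h K Y n i)"
  shows "((\<lambda>t. grad (u y h K Y n \<pi>) (sgd_avg y h K Y n \<theta>0 \<gamma> Z t)) \<longlonglongrightarrow> 0)
    \<and> (\<exists>\<theta>s. (\<lambda>t. sgd_avg y h K Y n \<theta>0 \<gamma> Z t) \<longlonglongrightarrow> \<theta>s \<and> grad (u y h K Y n \<pi>) \<theta>s = 0)"
proof -
  from bchoice[OF assms] obtain L where L: "\<forall>i\<in>UNIV. (\<lambda>t. sgd y h K Y n \<theta>0 \<gamma> Z t $ i) \<longlonglongrightarrow> L i
    \<and> measure_pmf.expectation \<pi> (regime_weight y h K Y n i) * L i
      = measure_pmf.expectation \<pi> (regime_moment y h K Y n i)" ..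
  define \<theta>s where "\<theta>s = (\<chi> i. L i)"
  have "sgd y h K Y n \<theta>0 \<gamma> Z \<longlonglongrightarrow> \<theta>s" using L by (intro vec_tendstoI) (simp add: \<theta>s_def)
  then have average: "sgd_avg y h K Y n \<theta>0 \<gamma> Z \<longlonglongrightarrow> \<theta>s" by (rule sgd_avg_tendsto)
  have critical: "grad (u y h K Y n \<pi>) \<theta>s = 0" using L by (simp add: grad_u vec_eq_iff \<theta>s_def)
  have "(\<lambda>t. grad (u y h K Y n \<pi>) (sgd_avg y h K Y n \<theta>0 \<gamma> Z t)) \<longlonglongrightarrow> grad (u y h K Y n \<pi>) \<theta>s"
    unfolding grad_u by (intro tendsto_intros average)
  then show ?thesis unfolding critical using average critical by blast
qed

theorem theorem2:
  fixes y h :: real and K :: "real \<Rightarrow> real" and n :: nat and Y :: "nat \<Rightarrow> real"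
    and \<Theta> :: "(real ^ 'm::finite) set" and \<pi> :: "(nat \<Rightarrow> 'm) pmf"
    and M :: "'w measure" and X :: "nat \<Rightarrow> 'w \<Rightarrow> (nat \<Rightarrow> 'm)"
    and \<theta>0 :: "real ^ 'm" and \<gamma> :: "nat \<Rightarrow> real"
  assumes h_pos: "h > 0"
    and kernel: "is_kernel K"
    and n_pos: "n \<ge> 1"
    and Theta_convex: "convex \<Theta>" and Theta_open: "open \<Theta>"
    and pi_support: "set_pmf \<pi> \<subseteq> Cfg n"
    and M_prob: "prob_space M"
    and X_meas: "\<And>t. t \<ge> 1 \<Longrightarrow> X t \<in> M \<rightarrow>\<^sub>M count_space UNIV"
    and X_cfg: "\<And>t \<omega>. t \<ge> 1 \<Longrightarrow> \<omega> \<in> space M \<Longrightarrow> X t \<omega> \<in> Cfg n"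
    and X_cond_law: "\<And>t S B. t \<ge> 1 \<Longrightarrow>
          measure M {\<omega> \<in> space M. (\<lambda>s\<in>{1..<t}. X s \<omega>) \<in> S \<and> X t \<omega> \<in> B}
        = measure M {\<omega> \<in> space M. (\<lambda>s\<in>{1..<t}. X s \<omega>) \<in> S} * measure_pmf.prob \<pi> B"
    and theta0: "\<theta>0 \<in> \<Theta>"
    and gamma_pos: "\<And>t. \<gamma> t > 0"
    and gamma_div: "\<not> summable \<gamma>"
    and gamma_sq: "summable (\<lambda>t. (\<gamma> t)\<^sup>2)"
    and compact_closure: "AE \<omega> in M.
          compact (closure (range (\<lambda>t. sgd_avg y h K Y n \<theta>0 \<gamma> (\<lambda>s. X s \<omega>) t)))
        \<and> closure (range (\<lambda>t. sgd_avg y h K Y n \<theta>0 \<gamma> (\<lambda>s. X s \<omega>) t)) \<subseteq> \<Theta>"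
  shows "AE \<omega> in M.
           ((\<lambda>t. grad (u y h K Y n \<pi>) (sgd_avg y h K Y n \<theta>0 \<gamma> (\<lambda>s. X s \<omega>) t)) \<longlonglongrightarrow> 0)
         \<and> (\<exists>\<theta>s. (\<lambda>t. sgd_avg y h K Y n \<theta>0 \<gamma> (\<lambda>s. X s \<omega>) t) \<longlonglongrightarrow> \<theta>s
                 \<and> grad (u y h K Y n \<pi>) \<theta>s = 0)"
proof -
  have iid: "finite_iid_sequence M X \<pi> (Cfg n)"
    using M_prob X_meas X_cfg X_cond_law finite_Cfg
    by (simp add: finite_iid_sequence_def finite_iid_sequence_axioms_def)
  have "\<And>v. K v \<ge> 0" using kernel by (simp add: is_kernel_def)
  then have "AE \<omega> in M. \<forall>i\<in>UNIV. \<exists>L. (\<lambda>t. sgd y h K Y n \<theta>0 \<gamma> (\<lambda>s. X s \<omega>) t $ i) \<longlonglongrightarrow> L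
      \<and> measure_pmf.expectation \<pi> (regime_weight y h K Y n i) * L
        = measure_pmf.expectation \<pi> (regime_moment y h K Y n i)"
    using h_pos n_pos gamma_pos gamma_div gamma_sq
    by (intro AE_finite_allI sgd_coordinate_converges[OF iid]) simp_all
  then show ?thesis by (rule eventually_mono) (rule sgd_avg_tendsto_critical_point)
qed

end
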